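(* In the operad $\mathcal{W}$ of black boxes and wiring diagrams, composition is associative: for composable wiring diagrams $\tau\colon W\to X$, $\phi\colon X\to Y$, $\psi\colon Y\to Z$ (where each domain may be an indexed family of black boxes, composed via disjoint unions of families), one has $(\psi\circ\phi)\circ\tau=\psi\circ(\phi\circ\tau)$ as wiring diagrams (up to isomorphism of the data); equivalently, the associativity axiom for a symmetric colored operad holds for $\mathcal{W}$.
   Context: A black box $X=(\mathrm{in}(X),\mathrm{out}(X),{\tt vset})$: finite sets of input and output wires with ${\tt vset}$ assigning a pointed set to each wire. For an indexed family $Y=(Y(i))_{i\in n}$ put $\mathrm{in}(Y)=\coprod_i\mathrm{in}(Y(i))$, $\mathrm{out}(Y)=\coprod_i\mathrm{out}(Y(i))$. A wiring diagram $\psi\colon Y\to Z$ consists of a finite set $\mathrm{Del}(\psi)$ of delay nodes with pointed sets ${\tt vset}(d)$, and a supplier assignment $s_\psi\colon \mathrm{Dem}(\psi)=\mathrm{out}(Z)\amalg\mathrm{in}(Y)\amalg\mathrm{Del}(\psi)\to\mathrm{Sup}(\psi)=\mathrm{in}(Z)\amalg\mathrm{out}(Y)\amalg\mathrm{Del}(\psi)$ preserving ${\tt vset}$ and with $s_\psi(\mathrm{out}(Z))\subseteq\mathrm{out}(Y)\amalg\mathrm{Del}(\psi)$; tuples differing by a bijection of delay-node sets compatible with all data are identified. Composition: given $\psi\colon Y\to Z$ and $\phi_i\colon X_i\to Y(i)$, let $\phi=\bigotimes\phi_i\colon X\to Y$ be their disjoint union ($\mathrm{Del}(\phi)=\coprod\mathrm{Del}(\phi_i)$,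 $s_\phi=\coprod s_{\phi_i}$). The composite $\omega=\psi\circ\phi$ has $\mathrm{Del}(\omega)=\mathrm{Del}(\phi)\amalg\mathrm{Del}(\psi)$, $\mathrm{Sup}(\omega)=\mathrm{in}(Z)\amalg\mathrm{out}(X)\amalg\mathrm{Del}(\omega)$, and $s_\omega=h\circ s_\phi|_{\mathrm{in}(X)\amalg\mathrm{Del}(\phi)}\amalg f\circ s_\psi|_{\mathrm{out}(Z)\amalg\mathrm{Del}(\psi)}$, where $f=\mathrm{id}_{\mathrm{in}(Z)}\amalg s_\phi|_{\mathrm{out}(Y)}\amalg\mathrm{id}_{\mathrm{Del}(\psi)}\colon\mathrm{Sup}(\psi)\to\mathrm{Sup}(\omega)$ and $h=(f\circ s_\psi)|_{\mathrm{in}(Y)}\amalg\mathrm{id}_{\mathrm{out}(X)}\amalg\mathrm{id}_{\mathrm{Del}(\phi)}\colon\mathrm{Sup}(\phi)\to\mathrm{Sup}(\omega)$. *)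

theory Defs
  imports Main
begin

type_synonym 'v pset = "'v set \<times> 'v"

definition pointed :: "'v pset \<Rightarrow> bool" where
  "pointed S \<longleftrightarrow> snd S \<in> fst S"

record ('w, 'v) box =
  b_in   :: "'w set"
  b_out  :: "'w set"
  v_in   :: "'w \<Rightarrow> 'v pset"
  v_out  :: "'w \<Rightarrow> 'v pset"

definition wf_box :: "('w, 'v) box \<Rightarrow> bool" where
  "wf_box B \<longleftrightarrow> finite (b_in B) \<and> finite (b_out B)
     \<and> (\<forall>w\<in>b_in B. pointed (v_in B w)) \<and> (\<forall>w\<in>b_out B. pointed (v_out B w))"

text \<open>Elements of the coproducts Dem = out(Z) + in(Y) + Del and Sup = in(Z) + out(Y) + Del
  of a wiring diagram Y -> Z, Y an indexed family (a list) of black boxes: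
  Outer w is a wire of the codomain Z, Inner i w the wire w of Y(i), Delay d a delay node.\<close>
datatype 'w port = Outer 'w | Inner nat 'w | Delay "nat list"

text \<open>A wiring diagram: delay nodes (named by elements of nat list, any finite set can be
  so named; diagrams are only considered up to renaming them), their pointed sets,
  and the supplier assignment.\<close>
record ('w, 'v) wd =
  wdel  :: "nat list set"
  wvdel :: "nat list \<Rightarrow> 'v pset"
  wsup  :: "'w port \<Rightarrow> 'w port"

definition Dem :: "('w, 'v) box list \<Rightarrow> ('w, 'v) box \<Rightarrow> ('w, 'v) wd \<Rightarrow> 'w port set" where
  "Dem Y Z \<psi> = Outer ` b_out Z \<union> {Inner i w | i w. i < length Y \<and> w \<in> b_in (Y ! i)}
               \<union> Delay ` wdel \<psi>"

definition Sup :: "('w, 'v) box list \<Rightarrow> ('w, 'v) box \<Rightarrow> ('w, 'v) wd \<Rightarrow> 'w port set" where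
  "Sup Y Z \<psi> = Outer ` b_in Z \<union> {Inner i w | i w. i < length Y \<and> w \<in> b_out (Y ! i)}
               \<union> Delay ` wdel \<psi>"

fun vdem :: "('w, 'v) box list \<Rightarrow> ('w, 'v) box \<Rightarrow> ('w, 'v) wd \<Rightarrow> 'w port \<Rightarrow> 'v pset" where
  "vdem Y Z \<psi> (Outer w) = v_out Z w"
| "vdem Y Z \<psi> (Inner i w) = v_in (Y ! i) w"
| "vdem Y Z \<psi> (Delay d) = wvdel \<psi> d"

fun vsup :: "('w, 'v) box list \<Rightarrow> ('w, 'v) box \<Rightarrow> ('w, 'v) wd \<Rightarrow> 'w port \<Rightarrow> 'v pset" where
  "vsup Y Z \<psi> (Outer w) = v_in Z w"
| "vsup Y Z \<psi> (Inner i w) = v_out (Y ! i) w"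
| "vsup Y Z \<psi> (Delay d) = wvdel \<psi> d"

definition is_wd :: "('w, 'v) box list \<Rightarrow> ('w, 'v) box \<Rightarrow> ('w, 'v) wd \<Rightarrow> bool" where
  "is_wd Y Z \<psi> \<longleftrightarrow> wf_box Z \<and> (\<forall>B\<in>set Y. wf_box B)
     \<and> finite (wdel \<psi>) \<and> (\<forall>d\<in>wdel \<psi>. pointed (wvdel \<psi> d))
     \<and> (\<forall>p\<in>Dem Y Z \<psi>. wsup \<psi> p \<in> Sup Y Z \<psi> \<and> vsup Y Z \<psi> (wsup \<psi> p) = vdem Y Z \<psi> p)
     \<and> (\<forall>w\<in>b_out Z. wsup \<psi> (Outer w) \<notin> Outer ` b_in Z)"

fun ren :: "(nat list \<Rightarrow> nat list) \<Rightarrow> 'w port \<Rightarrow> 'w port" where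
  "ren b (Delay d) = Delay (b d)"
| "ren b p = p"

definition wd_iso :: "('w, 'v) box list \<Rightarrow> ('w, 'v) box \<Rightarrow> ('w, 'v) wd \<Rightarrow> ('w, 'v) wd \<Rightarrow> bool" where
  "wd_iso Y Z \<omega>1 \<omega>2 \<longleftrightarrow> (\<exists>b. bij_betw b (wdel \<omega>1) (wdel \<omega>2)
     \<and> (\<forall>d\<in>wdel \<omega>1. wvdel \<omega>2 (b d) = wvdel \<omega>1 d)
     \<and> (\<forall>p\<in>Dem Y Z \<omega>1. wsup \<omega>2 (ren b p) = ren b (wsup \<omega>1 p)))"

text \<open>Concatenation of families: wire j of block i of Xs is wire (flat Xs i j) of concat Xs.\<close>
definition flat :: "'a list list \<Rightarrow> nat \<Rightarrow> nat \<Rightarrow> nat" where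
  "flat Xs i j = sum_list (map length (take i Xs)) + j"

fun unflat :: "nat list \<Rightarrow> nat \<Rightarrow> nat \<times> nat" where
  "unflat [] k = (0, k)"
| "unflat (m # ms) k = (if k < m then (0, k) else (case unflat ms (k - m) of (i, j) \<Rightarrow> (Suc i, j)))"

text \<open>Composition psi o (phi_0,...,phi_{n-1}) with phi_i : Xs!i -> Y!i and psi : Y -> Z.
  Delay nodes: 0#i#d for d in Del(phi_i), 1#d for d in Del(psi).\<close>

text \<open>Inclusion of out(X) + Del(phi) (block i) into Sup(omega).\<close>
fun comp_lift :: "'a list list \<Rightarrow> nat \<Rightarrow> 'w port \<Rightarrow> 'w port" where
  "comp_lift Xs i (Inner j w) = Inner (flat Xs i j) w"
| "comp_lift Xs i (Delay d) = Delay (0 # i # d)"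
| "comp_lift Xs i (Outer w) = Outer w"

fun comp_f :: "('w, 'v) wd \<Rightarrow> 'a list list \<Rightarrow> ('w, 'v) wd list \<Rightarrow> 'w port \<Rightarrow> 'w port" where
  "comp_f \<psi> Xs \<phi>s (Outer w) = Outer w"
| "comp_f \<psi> Xs \<phi>s (Inner i w) = comp_lift Xs i (wsup (\<phi>s ! i) (Outer w))"
| "comp_f \<psi> Xs \<phi>s (Delay d) = Delay (1 # d)"

fun comp_h :: "('w, 'v) wd \<Rightarrow> 'a list list \<Rightarrow> ('w, 'v) wd list \<Rightarrow> nat \<Rightarrow> 'w port \<Rightarrow> 'w port" where
  "comp_h \<psi> Xs \<phi>s i (Outer w) = comp_f \<psi> Xs \<phi>s (wsup \<psi> (Inner i w))"
| "comp_h \<psi> Xs \<phi>s i (Inner j w) = comp_lift Xs i (Inner j w)"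
| "comp_h \<psi> Xs \<phi>s i (Delay d) = comp_lift Xs i (Delay d)"

fun comp_sup_delay :: "('w, 'v) wd \<Rightarrow> 'a list list \<Rightarrow> ('w, 'v) wd list \<Rightarrow> nat list \<Rightarrow> 'w port" where
  "comp_sup_delay \<psi> Xs \<phi>s (0 # i # d) = comp_h \<psi> Xs \<phi>s i (wsup (\<phi>s ! i) (Delay d))"
| "comp_sup_delay \<psi> Xs \<phi>s (Suc 0 # d) = comp_f \<psi> Xs \<phi>s (wsup \<psi> (Delay d))"
| "comp_sup_delay \<psi> Xs \<phi>s e = Delay e"

fun comp_sup :: "('w, 'v) wd \<Rightarrow> 'a list list \<Rightarrow> ('w, 'v) wd list \<Rightarrow> 'w port \<Rightarrow> 'w port" where
  "comp_sup \<psi> Xs \<phi>s (Outer w) = comp_f \<psi> Xs \<phi>s (wsup \<psi> (Outer w))"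
| "comp_sup \<psi> Xs \<phi>s (Inner k w) =
     (case unflat (map length Xs) k of (i, j) \<Rightarrow> comp_h \<psi> Xs \<phi>s i (wsup (\<phi>s ! i) (Inner j w)))"
| "comp_sup \<psi> Xs \<phi>s (Delay e) = comp_sup_delay \<psi> Xs \<phi>s e"

fun comp_vdel :: "('w, 'v) wd \<Rightarrow> ('w, 'v) wd list \<Rightarrow> nat list \<Rightarrow> 'v pset" where
  "comp_vdel \<psi> \<phi>s (0 # i # d) = wvdel (\<phi>s ! i) d"
| "comp_vdel \<psi> \<phi>s (Suc 0 # d) = wvdel \<psi> d"
| "comp_vdel \<psi> \<phi>s e = undefined"

definition wd_comp :: "('w, 'v) wd \<Rightarrow> ('w, 'v) box list list \<Rightarrow> ('w, 'v) wd list \<Rightarrow> ('w, 'v) wd" where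
  "wd_comp \<psi> Xs \<phi>s =
     \<lparr> wdel = {0 # i # d | i d. i < length \<phi>s \<and> d \<in> wdel (\<phi>s ! i)} \<union> {1 # d | d. d \<in> wdel \<psi>},
       wvdel = comp_vdel \<psi> \<phi>s,
       wsup = comp_sup \<psi> Xs \<phi>s \<rparr>"

end

theory Submission
  imports Defs
begin

text \<open>Both composites have, as delay nodes, a copy of Del(\<tau>) + Del(\<phi>) + Del(\<psi>); they differ only
  in how the names are nested, and a relabelling translates one naming into the other.
  The supplier of a demand in a composite is found by chasing suppliers down through the levels
  until the chase stops in in(Z), out(W) or at a delay node. Both composites perform the same
  chase; they only bracket the index arithmetic of the flattened families differently. So it
  suffices to show, level by level, that the maps f and h of the two composites agree up to the
  relabelling.\<close>

lemma flat_cong: "map length L = map length L' \<Longrightarrow> flat L i j = flat L' i j"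
  by (simp add: flat_def take_map[symmetric])

lemma flat_Cons_0 [simp]: "flat (x # L) 0 j = j"
  by (simp add: flat_def)

lemma flat_Cons_Suc [simp]: "flat (x # L) (Suc i) j = length x + flat L i j"
  by (simp add: flat_def)

lemma unflat_flat:
  "i < length L \<Longrightarrow> j < length (L ! i) \<Longrightarrow> unflat (map length L) (flat L i j) = (i, j)"
proof (induction L arbitrary: i)
  case (Cons x L)
  then show ?case by (cases i) auto
qed simp

lemma flat_less_length_concat:
  "i < length L \<Longrightarrow> j < length (L ! i) \<Longrightarrow> flat L i j < length (concat L)"
proof (induction L arbitrary: i)
  case (Cons x L)
  then show ?case by (cases i) auto
qed simp

lemma nth_concat_flat:
  "i < length L \<Longrightarrow> j < length (L ! i) \<Longrightarrow> concat L ! flat L i j = L ! i ! j"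
proof (induction L arbitrary: i)
  case (Cons x L)
  then show ?case by (cases i) (auto simp: nth_append)
qed simp

lemma concat_indexE:
  assumes "k < length (concat L)"
  obtains i j where "i < length L" "j < length (L ! i)" "k = flat L i j"
  using assms
proof (induction L arbitrary: k thesis)
  case (Cons x L)
  show ?case
  proof (cases "k < length x")
    case True
    then show ?thesis using Cons.prems(1)[of 0 k] by simp
  next
    case False
    with Cons.prems(2) have "k - length x < length (concat L)" by simp
    then obtain i j where "i < length L" "j < length (L ! i)" "k - length x = flat L i j"
      using Cons.IH by blast
    with False show ?thesis using Cons.prems(1)[of "Suc i" j] by simp
  qed
qed simp

lemma flat_concat:
  "i < length L \<Longrightarrow> j < length (L ! i) \<Longrightarrow>
     flat (concat L) (flat L i j) l = flat (map concat L) i (flat (L ! i) j l)"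
proof (induction L arbitrary: i)
  case (Cons x L)
  then show ?case by (cases i) (auto simp: flat_def length_concat)
qed simp

lemma wsup_wd_comp [simp]: "wsup (wd_comp \<psi> Xs \<phi>s) = comp_sup \<psi> Xs \<phi>s"
  by (simp add: wd_comp_def)

lemma wvdel_wd_comp [simp]: "wvdel (wd_comp \<psi> Xs \<phi>s) = comp_vdel \<psi> \<phi>s"
  by (simp add: wd_comp_def)

lemma wdel_wd_comp [simp]:
  "wdel (wd_comp \<psi> Xs \<phi>s) =
     {0 # i # d | i d. i < length \<phi>s \<and> d \<in> wdel (\<phi>s ! i)} \<union> {1 # d | d. d \<in> wdel \<psi>}"
  by (simp add: wd_comp_def)

lemma Sup_cases:
  assumes "s \<in> Sup Y Z \<psi>"
  obtains (Outer) w where "s = Outer w" "w \<in> b_in Z"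
    | (Inner) i w where "s = Inner i w" "i < length Y" "w \<in> b_out (Y ! i)"
    | (Delay) d where "s = Delay d" "d \<in> wdel \<psi>"
  using assms unfolding Sup_def by blast

lemma Dem_cases:
  assumes "p \<in> Dem Y Z \<psi>"
  obtains (Outer) w where "p = Outer w" "w \<in> b_out Z"
    | (Inner) i w where "p = Inner i w" "i < length Y" "w \<in> b_in (Y ! i)"
    | (Delay) d where "p = Delay d" "d \<in> wdel \<psi>"
  using assms unfolding Dem_def by blast

lemma
  shows Dem_OuterI: "w \<in> b_out Z \<Longrightarrow> Outer w \<in> Dem Y Z \<psi>"
    and Dem_InnerI: "i < length Y \<Longrightarrow> w \<in> b_in (Y ! i) \<Longrightarrow> Inner i w \<in> Dem Y Z \<psi>"
    and Dem_DelayI: "d \<in> wdel \<psi> \<Longrightarrow> Delay d \<in> Dem Y Z \<psi>"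
  by (simp_all add: Dem_def)

lemma is_wd_wsup_in_Sup: "is_wd Y Z \<psi> \<Longrightarrow> p \<in> Dem Y Z \<psi> \<Longrightarrow> wsup \<psi> p \<in> Sup Y Z \<psi>"
  unfolding is_wd_def by blast

lemma is_wd_wsup_Outer_cases:
  assumes "is_wd Y Z \<psi>" "w \<in> b_out Z"
  obtains (Inner) i w' where "wsup \<psi> (Outer w) = Inner i w'" "i < length Y" "w' \<in> b_out (Y ! i)"
    | (Delay) d where "wsup \<psi> (Outer w) = Delay d" "d \<in> wdel \<psi>"
proof -
  have "wsup \<psi> (Outer w) \<in> Sup Y Z \<psi>" "wsup \<psi> (Outer w) \<notin> Outer ` b_in Z"
    using assms is_wd_wsup_in_Sup[OF assms(1) Dem_OuterI] unfolding is_wd_def by auto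
  then show thesis using that by (cases rule: Sup_cases) auto
qed

lemma comp_h_not_Outer: "p \<notin> range Outer \<Longrightarrow> comp_h \<psi> Xs \<phi>s i p = comp_lift Xs i p"
  by (cases p) auto

text \<open>Delay nodes of (\<psi> \<circ> \<phi>) \<circ> \<tau> are named 0 # k # d (d in \<tau> at the flattened
  index k), 1 # 0 # i # d (in \<phi>s ! i) and 1 # 1 # d (in \<psi>); those of
  \<psi> \<circ> (\<phi> \<circ> \<tau>) are named 0 # i # 0 # j # d, 0 # i # 1 # d and
  1 # d.\<close>

fun assoc_del :: "nat list \<Rightarrow> nat list \<Rightarrow> nat list" where
  "assoc_del ms (0 # k # d) = (case unflat ms k of (i, j) \<Rightarrow> 0 # i # 0 # j # d)"
| "assoc_del ms (Suc 0 # 0 # i # d) = 0 # i # Suc 0 # d"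
| "assoc_del ms (Suc 0 # Suc 0 # d) = Suc 0 # d"
| "assoc_del ms e = e"

fun unassoc_del :: "'a list list \<Rightarrow> nat list \<Rightarrow> nat list" where
  "unassoc_del L (0 # i # 0 # j # d) = 0 # flat L i j # d"
| "unassoc_del L (0 # i # Suc 0 # d) = Suc 0 # 0 # i # d"
| "unassoc_del L (Suc 0 # d) = Suc 0 # Suc 0 # d"
| "unassoc_del L e = e"

locale wd_triple =
  fixes Z :: "('w, 'v) box" and Y :: "('w, 'v) box list"
    and Xs :: "('w, 'v) box list list" and Wss :: "('w, 'v) box list list list"
    and \<psi> :: "('w, 'v) wd" and \<phi>s :: "('w, 'v) wd list" and \<tau>ss :: "('w, 'v) wd list list"
  assumes \<psi>_wd: "is_wd Y Z \<psi>"
    and length_Xs: "length Xs = length Y" and length_\<phi>s: "length \<phi>s = length Y"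
    and \<phi>s_wd: "\<forall>i<length Y. is_wd (Xs ! i) (Y ! i) (\<phi>s ! i)"
    and length_Wss: "length Wss = length Y" and length_\<tau>ss: "length \<tau>ss = length Y"
    and \<tau>ss_wd: "\<forall>i<length Y. length (Wss ! i) = length (Xs ! i) \<and> length (\<tau>ss ! i) = length (Xs ! i)
           \<and> (\<forall>j<length (Xs ! i). is_wd (Wss ! i ! j) (Xs ! i ! j) (\<tau>ss ! i ! j))"
begin

abbreviation "\<psi>\<phi> \<equiv> wd_comp \<psi> Xs \<phi>s"
abbreviation "\<phi>\<tau>s \<equiv> map (\<lambda>i. wd_comp (\<phi>s ! i) (Wss ! i) (\<tau>ss ! i)) [0..<length Y]"
abbreviation "lhs \<equiv> wd_comp \<psi>\<phi> (concat Wss) (concat \<tau>ss)"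
abbreviation "rhs \<equiv> wd_comp \<psi> (map concat Wss) \<phi>\<tau>s"
abbreviation "\<beta> \<equiv> assoc_del (map length Xs)"

lemma \<phi>_wd: "i < length Y \<Longrightarrow> is_wd (Xs ! i) (Y ! i) (\<phi>s ! i)"
  using \<phi>s_wd by blast

lemma \<tau>_wd: "i < length Y \<Longrightarrow> j < length (Xs ! i) \<Longrightarrow> is_wd (Wss ! i ! j) (Xs ! i ! j) (\<tau>ss ! i ! j)"
  using \<tau>ss_wd by blast

lemma map_length_Wss: "map length Wss = map length Xs"
  using \<tau>ss_wd length_Wss length_Xs by (intro nth_equalityI) auto

lemma map_length_\<tau>ss: "map length \<tau>ss = map length Xs"
  using \<tau>ss_wd length_\<tau>ss length_Xs by (intro nth_equalityI) auto

lemma flat_Wss: "flat Wss i j = flat Xs i j"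
  using flat_cong[OF map_length_Wss] .

lemma nth_concat_\<tau>ss:
  "i < length Y \<Longrightarrow> j < length (Xs ! i) \<Longrightarrow> concat \<tau>ss ! flat Xs i j = \<tau>ss ! i ! j"
  using nth_concat_flat[of i \<tau>ss j] flat_cong[OF map_length_\<tau>ss] \<tau>ss_wd length_\<tau>ss by auto

lemma flat_less_length_concat_Wss:
  "i < length Y \<Longrightarrow> j < length (Xs ! i) \<Longrightarrow> flat Xs i j < length (concat Wss)"
  using flat_less_length_concat[of i Wss j] flat_Wss \<tau>ss_wd length_Wss by auto

lemma nth_concat_Wss:
  "i < length Y \<Longrightarrow> j < length (Xs ! i) \<Longrightarrow> concat Wss ! flat Xs i j = Wss ! i ! j"
  using nth_concat_flat[of i Wss j] flat_Wss \<tau>ss_wd length_Wss by auto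

lemma flat_concat_Wss:
  "i < length Y \<Longrightarrow> j < length (Xs ! i) \<Longrightarrow>
     flat (concat Wss) (flat Xs i j) l = flat (map concat Wss) i (flat (Wss ! i) j l)"
  using flat_concat[of i Wss j l] flat_Wss \<tau>ss_wd length_Wss by auto

lemma unflat_flat_Xs:
  "i < length Y \<Longrightarrow> j < length (Xs ! i) \<Longrightarrow> unflat (map length Xs) (flat Xs i j) = (i, j)"
  using unflat_flat[of i Xs j] length_Xs by simp

lemma concat_concat_Wss_indexE:
  assumes "k < length (concat (concat Wss))"
  obtains i j l where "i < length Y" "j < length (Xs ! i)" "l < length (Wss ! i ! j)"
    "k = flat (concat Wss) (flat Xs i j) l" "k = flat (map concat Wss) i (flat (Wss ! i) j l)"
    "concat (concat Wss) ! k = Wss ! i ! j ! l"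
proof -
  obtain m l where ml: "m < length (concat Wss)" "l < length (concat Wss ! m)"
    "k = flat (concat Wss) m l"
    using assms by (rule concat_indexE)
  obtain i j where ij: "i < length Wss" "j < length (Wss ! i)" "m = flat Wss i j"
    using ml(1) by (rule concat_indexE)
  have "i < length Y" "j < length (Xs ! i)"
    using ij length_Wss \<tau>ss_wd by auto
  moreover have "concat Wss ! m = Wss ! i ! j"
    using nth_concat_flat[OF ij(1,2)] ij(3) by simp
  ultimately show thesis
    using that ml ij flat_Wss flat_concat_Wss nth_concat_flat[OF ml(1,2)] by simp
qed

text \<open>Whenever the supplier
  found lies on an input wire of an inner box, the chase continues in the enclosing diagram;
  this is where each lemma invokes an earlier one.\<close>

lemma assoc_comp_f_lift:
  assumes i: "i < length Y" and y: "y \<in> Sup (Xs ! i) (Y ! i) (\<phi>s ! i)" "y \<notin> range Outer"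
  shows "ren \<beta> (comp_f \<psi>\<phi> (concat Wss) (concat \<tau>ss) (comp_lift Xs i y))
         = comp_lift (map concat Wss) i (comp_f (\<phi>s ! i) (Wss ! i) (\<tau>ss ! i) y)"
  using y(1)
proof (cases rule: Sup_cases)
  case (Inner j z)
  then have j: "j < length (Xs ! i)" by simp
  from \<tau>_wd[OF i j] \<open>z \<in> _\<close> show ?thesis
    by (cases rule: is_wd_wsup_Outer_cases)
      (simp_all add: Inner nth_concat_\<tau>ss[OF i j] flat_concat_Wss[OF i j] unflat_flat_Xs[OF i j])
qed (use y(2) in simp_all)

lemma assoc_comp_f:
  assumes "s \<in> Sup Y Z \<psi>"
  shows "ren \<beta> (comp_f \<psi>\<phi> (concat Wss) (concat \<tau>ss) (comp_f \<psi> Xs \<phi>s s))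
         = comp_f \<psi> (map concat Wss) \<phi>\<tau>s s"
  using assms
proof (cases rule: Sup_cases)
  case (Inner i w)
  have "wsup (\<phi>s ! i) (Outer w) \<in> Sup (Xs ! i) (Y ! i) (\<phi>s ! i) - range Outer"
    using \<phi>_wd[OF \<open>i < _\<close>] \<open>w \<in> _\<close> by (cases rule: is_wd_wsup_Outer_cases) (auto simp: Sup_def)
  then show ?thesis using assoc_comp_f_lift \<open>i < _\<close> Inner by simp
qed simp_all

lemma assoc_comp_h_block:
  assumes i: "i < length Y" and y: "y \<in> Sup (Xs ! i) (Y ! i) (\<phi>s ! i)"
  shows "ren \<beta> (comp_f \<psi>\<phi> (concat Wss) (concat \<tau>ss) (comp_h \<psi> Xs \<phi>s i y))
         = comp_h \<psi> (map concat Wss) \<phi>\<tau>s i (comp_f (\<phi>s ! i) (Wss ! i) (\<tau>ss ! i) y)"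
proof (cases "y \<in> range Outer")
  case True
  with y obtain z where z: "y = Outer z" "z \<in> b_in (Y ! i)"
    by (cases rule: Sup_cases) auto
  have "wsup \<psi> (Inner i z) \<in> Sup Y Z \<psi>"
    using is_wd_wsup_in_Sup[OF \<psi>_wd Dem_InnerI] i z by auto
  from assoc_comp_f[OF this] z show ?thesis by simp
next
  case False
  have "comp_f (\<phi>s ! i) (Wss ! i) (\<tau>ss ! i) y \<notin> range Outer" (is "?y' \<notin> _")
    using y
  proof (cases rule: Sup_cases)
    case (Inner j z)
    from \<tau>_wd[OF i \<open>j < _\<close>] \<open>z \<in> _\<close> show ?thesis
      by (cases rule: is_wd_wsup_Outer_cases) (auto simp: Inner)
  qed (use False in auto)
  then have "comp_h \<psi> (map concat Wss) \<phi>\<tau>s i ?y' = comp_lift (map concat Wss) i ?y'"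
    by (rule comp_h_not_Outer)
  moreover have "comp_h \<psi> Xs \<phi>s i y = comp_lift Xs i y"
    using False by (rule comp_h_not_Outer)
  ultimately show ?thesis
    using assoc_comp_f_lift[OF i y False] by simp
qed

lemma assoc_comp_h:
  assumes i: "i < length Y" and j: "j < length (Xs ! i)"
    and v: "v \<in> Sup (Wss ! i ! j) (Xs ! i ! j) (\<tau>ss ! i ! j)"
  shows "ren \<beta> (comp_h \<psi>\<phi> (concat Wss) (concat \<tau>ss) (flat Xs i j) v)
         = comp_h \<psi> (map concat Wss) \<phi>\<tau>s i (comp_h (\<phi>s ! i) (Wss ! i) (\<tau>ss ! i) j v)"
  using v
proof (cases rule: Sup_cases)
  case (Outer x)
  have "wsup (\<phi>s ! i) (Inner j x) \<in> Sup (Xs ! i) (Y ! i) (\<phi>s ! i)"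
    using is_wd_wsup_in_Sup[OF \<phi>_wd Dem_InnerI] i j Outer by auto
  from assoc_comp_h_block[OF i this] show ?thesis
    using Outer unflat_flat_Xs[OF i j] by simp
qed (simp_all add: flat_concat_Wss[OF i j] unflat_flat_Xs[OF i j])

lemma lhs_delE:
  assumes "e \<in> wdel lhs"
  obtains (\<tau>) i j d where "e = 0 # flat Xs i j # d" "i < length Y" "j < length (Xs ! i)"
      "d \<in> wdel (\<tau>ss ! i ! j)"
    | (\<phi>) i d where "e = 1 # 0 # i # d" "i < length Y" "d \<in> wdel (\<phi>s ! i)"
    | (\<psi>) d where "e = 1 # 1 # d" "d \<in> wdel \<psi>"
proof -
  from assms consider
      (\<tau>) k d where "e = 0 # k # d" "k < length (concat \<tau>ss)" "d \<in> wdel (concat \<tau>ss ! k)"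
    | (\<phi>) i d where "e = 1 # 0 # i # d" "i < length Y" "d \<in> wdel (\<phi>s ! i)"
    | (\<psi>) d where "e = 1 # 1 # d" "d \<in> wdel \<psi>"
    using length_\<phi>s by auto
  then show thesis
  proof cases
    case \<tau>
    obtain i j where "i < length \<tau>ss" "j < length (\<tau>ss ! i)" "k = flat \<tau>ss i j"
      using \<tau>(2) by (rule concat_indexE)
    with \<tau> show thesis
      using that(1) nth_concat_\<tau>ss flat_cong[OF map_length_\<tau>ss] length_\<tau>ss \<tau>ss_wd by metis
  qed (use that in auto)
qed

lemma lhs_delI:
  "i < length Y \<Longrightarrow> j < length (Xs ! i) \<Longrightarrow> d \<in> wdel (\<tau>ss ! i ! j) \<Longrightarrow> 0 # flat Xs i j # d \<in> wdel lhs"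
  "i < length Y \<Longrightarrow> d \<in> wdel (\<phi>s ! i) \<Longrightarrow> 1 # 0 # i # d \<in> wdel lhs"
  "d \<in> wdel \<psi> \<Longrightarrow> 1 # 1 # d \<in> wdel lhs"
proof -
  assume "i < length Y" "j < length (Xs ! i)" "d \<in> wdel (\<tau>ss ! i ! j)"
  moreover from this have "flat Xs i j < length (concat \<tau>ss)"
    using flat_less_length_concat[of i \<tau>ss j] flat_cong[OF map_length_\<tau>ss] length_\<tau>ss \<tau>ss_wd by auto
  ultimately show "0 # flat Xs i j # d \<in> wdel lhs"
    using nth_concat_\<tau>ss by auto
qed (use length_\<phi>s in auto)

lemma rhs_del_iff:
  "e \<in> wdel rhs \<longleftrightarrow>
     (\<exists>i j d. e = 0 # i # 0 # j # d \<and> i < length Y \<and> j < length (Xs ! i) \<and> d \<in> wdel (\<tau>ss ! i ! j))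
   \<or> (\<exists>i d. e = 0 # i # 1 # d \<and> i < length Y \<and> d \<in> wdel (\<phi>s ! i))
   \<or> (\<exists>d. e = 1 # d \<and> d \<in> wdel \<psi>)"
  using \<tau>ss_wd by auto

lemma bij_betw_assoc_del: "bij_betw \<beta> (wdel lhs) (wdel rhs)"
proof (rule bij_betw_byWitness[where f' = "unassoc_del Xs"])
  show "\<forall>e\<in>wdel lhs. unassoc_del Xs (\<beta> e) = e" "\<beta> ` wdel lhs \<subseteq> wdel rhs"
    by (auto elim!: lhs_delE simp: unflat_flat_Xs rhs_del_iff simp del: wdel_wd_comp)
  show "\<forall>e\<in>wdel rhs. \<beta> (unassoc_del Xs e) = e" "unassoc_del Xs ` wdel rhs \<subseteq> wdel lhs"
    using lhs_delI by (auto simp: rhs_del_iff unflat_flat_Xs simp del: wdel_wd_comp)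
qed

lemma wvdel_assoc_del: "e \<in> wdel lhs \<Longrightarrow> wvdel rhs (\<beta> e) = wvdel lhs e"
  by (auto elim!: lhs_delE simp: unflat_flat_Xs nth_concat_\<tau>ss simp del: wdel_wd_comp)

lemma wsup_assoc_del:
  assumes "p \<in> Dem (concat (concat Wss)) Z lhs"
  shows "wsup rhs (ren \<beta> p) = ren \<beta> (wsup lhs p)"
  using assms
proof (cases rule: Dem_cases)
  case (Outer w)
  have "wsup \<psi> (Outer w) \<in> Sup Y Z \<psi>"
    using is_wd_wsup_in_Sup[OF \<psi>_wd Dem_OuterI] Outer by auto
  from assoc_comp_f[OF this] Outer show ?thesis by simp
next
  case (Inner k w)
  from \<open>k < _\<close> obtain i j l where ijl: "i < length Y" "j < length (Xs ! i)" "l < length (Wss ! i ! j)"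
    "k = flat (concat Wss) (flat Xs i j) l" "k = flat (map concat Wss) i (flat (Wss ! i) j l)"
    "concat (concat Wss) ! k = Wss ! i ! j ! l"
    by (rule concat_concat_Wss_indexE)
  have "flat (Wss ! i) j l < length (concat (Wss ! i))"
    using flat_less_length_concat[of j "Wss ! i" l] ijl(1-3) \<tau>ss_wd by auto
  then have "unflat (map length (map concat Wss)) k = (i, flat (Wss ! i) j l)"
    using unflat_flat[of i "map concat Wss"] ijl(1,5) length_Wss by simp
  moreover have "unflat (map length (Wss ! i)) (flat (Wss ! i) j l) = (j, l)"
    using unflat_flat[of j "Wss ! i" l] ijl(1-3) \<tau>ss_wd by auto
  moreover have "unflat (map length (concat Wss)) k = (flat Xs i j, l)"
    using unflat_flat[of "flat Xs i j" "concat Wss" l] ijl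
      flat_less_length_concat_Wss nth_concat_Wss by simp
  moreover have "wsup (\<tau>ss ! i ! j) (Inner l w) \<in> Sup (Wss ! i ! j) (Xs ! i ! j) (\<tau>ss ! i ! j)"
    using is_wd_wsup_in_Sup[OF \<tau>_wd Dem_InnerI] ijl Inner by auto
  ultimately show ?thesis
    using assoc_comp_h Inner ijl nth_concat_\<tau>ss by simp
next
  case (Delay e)
  from \<open>e \<in> _\<close> show ?thesis
  proof (cases rule: lhs_delE)
    case (\<tau> i j d)
    have "wsup (\<tau>ss ! i ! j) (Delay d) \<in> Sup (Wss ! i ! j) (Xs ! i ! j) (\<tau>ss ! i ! j)"
      using is_wd_wsup_in_Sup[OF \<tau>_wd Dem_DelayI] \<tau> by auto
    from assoc_comp_h[OF \<tau>(2,3) this] show ?thesis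
      using Delay \<tau> unflat_flat_Xs nth_concat_\<tau>ss by simp
  next
    case (\<phi> i d)
    have "wsup (\<phi>s ! i) (Delay d) \<in> Sup (Xs ! i) (Y ! i) (\<phi>s ! i)"
      using is_wd_wsup_in_Sup[OF \<phi>_wd Dem_DelayI] \<phi> by auto
    from assoc_comp_h_block[OF \<phi>(2) this] show ?thesis using Delay \<phi> by simp
  next
    case (\<psi> d)
    have "wsup \<psi> (Delay d) \<in> Sup Y Z \<psi>"
      using is_wd_wsup_in_Sup[OF \<psi>_wd Dem_DelayI] \<psi> by auto
    from assoc_comp_f[OF this] show ?thesis using Delay \<psi> by simp
  qed
qed

lemma wd_iso_assoc: "wd_iso (concat (concat Wss)) Z lhs rhs"
  unfolding wd_iso_def
  using bij_betw_assoc_del wvdel_assoc_del wsup_assoc_del by blast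

end

theorem proposition2p15:
  fixes Z :: "('w, 'v) box" and Y :: "('w, 'v) box list"
    and Xs :: "('w, 'v) box list list" and Wss :: "('w, 'v) box list list list"
    and \<psi> :: "('w, 'v) wd" and \<phi>s :: "('w, 'v) wd list" and \<tau>ss :: "('w, 'v) wd list list"
  assumes "is_wd Y Z \<psi>"
    and "length Xs = length Y" and "length \<phi>s = length Y"
    and "\<forall>i<length Y. is_wd (Xs ! i) (Y ! i) (\<phi>s ! i)"
    and "length Wss = length Y" and "length \<tau>ss = length Y"
    and "\<forall>i<length Y. length (Wss ! i) = length (Xs ! i) \<and> length (\<tau>ss ! i) = length (Xs ! i)
           \<and> (\<forall>j<length (Xs ! i). is_wd (Wss ! i ! j) (Xs ! i ! j) (\<tau>ss ! i ! j))"
  shows "wd_iso (concat (concat Wss)) Z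
           (wd_comp (wd_comp \<psi> Xs \<phi>s) (concat Wss) (concat \<tau>ss))
           (wd_comp \<psi> (map concat Wss)
              (map (\<lambda>i. wd_comp (\<phi>s ! i) (Wss ! i) (\<tau>ss ! i)) [0..<length Y]))"
  using wd_triple.wd_iso_assoc[OF wd_triple.intro[OF assms]] .

end
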